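(* Under the setting below, for every $\tau\in[0,\bar\tau)$ one has $$B(\tau)=A(\tau)+(2e^{-\delta\tau}-1)S^*(\tau)\beta'(S^*(\tau)),$$ hence $B(\tau)<A(\tau)$; in particular $\lambda=0$ is never a root of $\lambda+A(\tau)-B(\tau)e^{-\lambda\tau}=0$. Moreover, if this equation has a purely imaginary root $i\omega$ for some $\tau\in[0,\bar\tau)$, then $A(\tau)<|B(\tau)|$ (so $B(\tau)<0$), which is equivalent to $$\frac{4\delta e^{-\delta\tau}}{2e^{-\delta\tau}-1}+(2e^{-\delta\tau}-1)\,\chi\!\left(\beta^{-1}\!\Big(\frac{\delta}{2e^{-\delta\tau}-1}\Big)\right)<0,\qquad \chi(y):=y\beta'(y).$$
   Context: Let $\delta>0$ and $\beta:[0,+\infty)\to(0,+\infty)$ continuously differentiable, strictly decreasing, with $\beta'(s)<0$ for $s>0$, $\lim_{S\to+\infty}\beta(S)=0$, and assume $\delta<\beta(0)$. Let $\bar\tau:=\frac1\delta\ln\!\big(\frac{2\beta(0)}{\delta+\beta(0)}\big)$, $\beta^{-1}:(0,\beta(0)]\to[0,\infty)$ the inverse of $\beta$. For $\tau\in[0,\bar\tau)$ set $S^*(\tau)=\beta^{-1}\!\big(\frac{\delta}{2e^{-\delta\tau}-1}\big)$, $N^*(\tau)=(2e^{-\delta\tau}-1)e^{\delta\tau}S^*(\tau)$, $A(\tau)=\delta+\beta(S^*(\tau))$ and $B(\tau)=[2\beta(S^*(\tau))+N^*(\tau)\beta'(S^*(\tau))]e^{-\delta\tau}$. *)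

theory Defs
  imports "HOL-Analysis.Analysis"
begin

definition tau_bar :: "real \<Rightarrow> (real \<Rightarrow> real) \<Rightarrow> real" where
  "tau_bar \<delta> \<beta> = (1 / \<delta>) * ln (2 * \<beta> 0 / (\<delta> + \<beta> 0))"

text \<open>Inverse of beta on its range (0, beta 0], beta being a bijection [0,inf) -> (0, beta 0].\<close>
definition beta_inv :: "(real \<Rightarrow> real) \<Rightarrow> real \<Rightarrow> real" where
  "beta_inv \<beta> y = the_inv_into {0..} \<beta> y"

definition S_star :: "real \<Rightarrow> (real \<Rightarrow> real) \<Rightarrow> real \<Rightarrow> real" where
  "S_star \<delta> \<beta> \<tau> = beta_inv \<beta> (\<delta> / (2 * exp (-\<delta>*\<tau>) - 1))"

definition N_star :: "real \<Rightarrow> (real \<Rightarrow> real) \<Rightarrow> real \<Rightarrow> real" where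
  "N_star \<delta> \<beta> \<tau> = (2 * exp (-\<delta>*\<tau>) - 1) * exp (\<delta>*\<tau>) * S_star \<delta> \<beta> \<tau>"

definition A_coef :: "real \<Rightarrow> (real \<Rightarrow> real) \<Rightarrow> real \<Rightarrow> real" where
  "A_coef \<delta> \<beta> \<tau> = \<delta> + \<beta> (S_star \<delta> \<beta> \<tau>)"

definition B_coef :: "real \<Rightarrow> (real \<Rightarrow> real) \<Rightarrow> (real \<Rightarrow> real) \<Rightarrow> real \<Rightarrow> real" where
  "B_coef \<delta> \<beta> \<beta>' \<tau> = (2 * \<beta> (S_star \<delta> \<beta> \<tau>) + N_star \<delta> \<beta> \<tau> * \<beta>' (S_star \<delta> \<beta> \<tau>))
      * exp (-\<delta>*\<tau>)"

definition chi :: "(real \<Rightarrow> real) \<Rightarrow> real \<Rightarrow> real" where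
  "chi \<beta>' y = y * \<beta>' y"

end

theory Submission
  imports Defs
begin

text \<open>
  Write c = 2 e^(-delta tau) - 1 for the factor occurring throughout.
  For 0 <= tau < tau_bar one has delta < c * beta 0, so c > 0 and the level
  y = delta / c lies in (0, beta 0); since beta is a continuous decreasing
  bijection of [0,inf) onto (0, beta 0], the equilibrium S* = beta_inv beta y
  satisfies beta S* = y and S* > 0, hence beta' S* < 0.  Substituting
  N* = c e^(delta tau) S* and beta S* = delta / c into B gives the identity
  B = A + c S* beta'(S*), so B < A; A + B then equals the left-hand side of the
  chi-criterion.  Finally, a purely imaginary root i omega of
  lambda + A - B e^(-lambda tau) forces A = B cos(omega tau), hence A <= |B|,
  and equality would force omega = 0, i.e. A = B, contradicting B < A.
\<close>

text \<open>On [0, tau_bar) the factor 2 e^(-delta tau) - 1 exceeds delta / beta 0;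
  this is exactly what the definition of tau_bar is designed for.\<close>
lemma factor_exceeds_ratio:
  fixes \<delta> b0 \<tau> :: real
  assumes "\<delta> > 0" "b0 > 0"
    and "\<tau> < (1 / \<delta>) * ln (2 * b0 / (\<delta> + b0))"
  shows "\<delta> < (2 * exp (-\<delta>*\<tau>) - 1) * b0"
proof -
  have "\<delta> * \<tau> < ln (2 * b0 / (\<delta> + b0))"
    using assms by (simp add: field_simps)
  then have "exp (\<delta> * \<tau>) < 2 * b0 / (\<delta> + b0)"
    using assms by (metis exp_less_mono exp_ln add_pos_pos divide_pos_pos mult_pos_pos zero_less_numeral)
  then have "\<delta> + b0 < 2 * b0 * exp (-\<delta>*\<tau>)"
    using assms by (simp add: field_simps exp_minus)
  then show ?thesis by (simp add: algebra_simps)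
qed

lemma beta_inv_solves:
  fixes \<beta> :: "real \<Rightarrow> real" and y :: real
  assumes cont: "continuous_on {0..} \<beta>"
    and decr: "\<And>x z. 0 \<le> x \<Longrightarrow> x < z \<Longrightarrow> \<beta> z < \<beta> x"
    and lim: "(\<beta> \<longlongrightarrow> 0) at_top"
    and y: "0 < y" "y \<le> \<beta> 0"
  shows "beta_inv \<beta> y \<ge> 0" "\<beta> (beta_inv \<beta> y) = y"
proof -
  obtain b where b: "\<And>x. x \<ge> b \<Longrightarrow> \<beta> x < y"
    using order_tendstoD(2)[OF lim y(1)] by (auto simp: eventually_at_top_linorder)
  have "\<exists>x\<ge>0. x \<le> max b 0 \<and> \<beta> x = y"
    using b[of "max b 0"] y cont by (intro IVT2') (auto intro: continuous_on_subset)
  then obtain S where S: "S \<ge> 0" "\<beta> S = y" by blast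
  have inj: "inj_on \<beta> {0..}"
    unfolding inj_on_def
    by (metis atLeast_iff decr less_irrefl linorder_neqE_linordered_idom)
  have "beta_inv \<beta> y = S"
    unfolding beta_inv_def using the_inv_into_f_f[OF inj, of S] S by simp
  then show "beta_inv \<beta> y \<ge> 0" "\<beta> (beta_inv \<beta> y) = y" using S by simp_all
qed

lemma B_coef_identity:
  fixes \<delta> \<tau> :: real and \<beta> \<beta>' :: "real \<Rightarrow> real"
  defines "c \<equiv> 2 * exp (-\<delta>*\<tau>) - 1"
  assumes c_pos: "c > 0"
    and level: "\<beta> (S_star \<delta> \<beta> \<tau>) = \<delta> / c"
  shows "B_coef \<delta> \<beta> \<beta>' \<tau> = A_coef \<delta> \<beta> \<tau> + c * S_star \<delta> \<beta> \<tau> * \<beta>' (S_star \<delta> \<beta> \<tau>)"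
proof -
  let ?E = "exp (-\<delta>*\<tau>)" and ?S = "S_star \<delta> \<beta> \<tau>"
  have inv: "?E * exp (\<delta>*\<tau>) = 1" by (simp add: exp_minus)
  have "B_coef \<delta> \<beta> \<beta>' \<tau> = 2 * (\<delta> / c) * ?E + c * ?S * \<beta>' ?S * (?E * exp (\<delta>*\<tau>))"
    unfolding B_coef_def N_star_def level c_def by (simp add: algebra_simps)
  also have "2 * (\<delta> / c) * ?E = \<delta> + \<delta> / c"
    using c_pos unfolding c_def by (simp add: field_simps)
  finally show ?thesis
    unfolding A_coef_def level inv by simp
qed

lemma imaginary_root_dominance:
  fixes A B \<omega> \<tau> :: real
  assumes BA: "B < A"
    and root: "\<i> * complex_of_real \<omega> + complex_of_real A
          - complex_of_real B * exp (- (\<i> * complex_of_real \<omega>) * complex_of_real \<tau>) = 0"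
  shows "A < \<bar>B\<bar> \<and> B < 0"
proof -
  have ex: "exp (- (\<i> * complex_of_real \<omega>) * complex_of_real \<tau>)
      = Complex (cos (\<omega>*\<tau>)) (- sin (\<omega>*\<tau>))"
    by (simp add: exp_eq_polar cis.ctr)
  have re: "A = B * cos (\<omega>*\<tau>)" and im: "\<omega> + B * sin (\<omega>*\<tau>) = 0"
    using arg_cong[OF root, of Re] arg_cong[OF root, of Im] unfolding ex by simp_all
  have "A \<le> \<bar>B * cos (\<omega>*\<tau>)\<bar>"
    using re by simp
  also have "\<dots> = \<bar>B\<bar> * \<bar>cos (\<omega>*\<tau>)\<bar>"
    by (rule abs_mult)
  also have "\<dots> \<le> \<bar>B\<bar>"
    using abs_cos_le_one[of "\<omega>*\<tau>"] by (simp add: mult_left_le)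
  finally have le: "A \<le> \<bar>B\<bar>" .
  have "A \<noteq> \<bar>B\<bar>"
  proof
    assume AB: "A = \<bar>B\<bar>"
    then have "B \<noteq> 0" using BA by auto
    moreover have "\<bar>B\<bar> * \<bar>cos (\<omega>*\<tau>)\<bar> = \<bar>B\<bar> * 1"
      by (metis AB abs_abs abs_mult mult_1_right re)
    ultimately have "\<bar>cos (\<omega>*\<tau>)\<bar> = 1" by simp
    then have "sin (\<omega>*\<tau>) = 0"
      using sin_cos_squared_add[of "\<omega>*\<tau>"]
      by (metis add_cancel_left_left one_power2 power2_abs power_eq_0_iff)
    then have "\<omega> = 0" using im by simp
    then show False using re BA by simp
  qed
  with le have "A < \<bar>B\<bar>" by simp
  then show ?thesis using BA by auto
qed

lemma dominance_iff_sum_neg: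
  fixes A B :: real
  assumes "A > 0" "B < A"
  shows "A < \<bar>B\<bar> \<longleftrightarrow> A + B < 0"
  using assms by auto

lemma admissible_delay_coefficients:
  fixes \<delta> \<tau> :: real and \<beta> \<beta>' :: "real \<Rightarrow> real"
  defines "c \<equiv> 2 * exp (-\<delta>*\<tau>) - 1"
  assumes delta_pos: "\<delta> > 0"
    and beta_pos: "\<And>s. s \<ge> 0 \<Longrightarrow> \<beta> s > 0"
    and beta_deriv: "\<And>s. s \<ge> 0 \<Longrightarrow> (\<beta> has_real_derivative \<beta>' s) (at s within {0..})"
    and beta_decr: "\<And>x y. 0 \<le> x \<Longrightarrow> x < y \<Longrightarrow> \<beta> y < \<beta> x"
    and beta'_neg: "\<And>s. s > 0 \<Longrightarrow> \<beta>' s < 0"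
    and beta_lim: "(\<beta> \<longlongrightarrow> 0) at_top"
    and \<tau>: "0 \<le> \<tau> \<and> \<tau> < tau_bar \<delta> \<beta>"
  shows "B_coef \<delta> \<beta> \<beta>' \<tau> = A_coef \<delta> \<beta> \<tau> + c * S_star \<delta> \<beta> \<tau> * \<beta>' (S_star \<delta> \<beta> \<tau>)"
    and "B_coef \<delta> \<beta> \<beta>' \<tau> < A_coef \<delta> \<beta> \<tau>"
    and "A_coef \<delta> \<beta> \<tau> > 0"
    and "A_coef \<delta> \<beta> \<tau> + B_coef \<delta> \<beta> \<beta>' \<tau> =
          4 * \<delta> * exp (-\<delta>*\<tau>) / c + c * chi \<beta>' (beta_inv \<beta> (\<delta> / c))"
proof -
  define S where "S = S_star \<delta> \<beta> \<tau>"
  have c_gt: "\<delta> < c * \<beta> 0"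
    using factor_exceeds_ratio[OF delta_pos beta_pos[of 0]] \<tau> by (simp add: c_def tau_bar_def)
  have c_pos: "c > 0"
    using c_gt delta_pos beta_pos[of 0] by (smt (verit) mult_nonpos_nonneg)
  have level: "0 < \<delta> / c" "\<delta> / c < \<beta> 0"
    using c_pos c_gt delta_pos by (simp_all add: field_simps)
  have cont: "continuous_on {0..} \<beta>"
    using beta_deriv by (intro DERIV_continuous_on) auto
  have S_inv: "beta_inv \<beta> (\<delta> / c) = S"
    by (simp add: S_def S_star_def c_def)
  have S_level: "\<beta> S = \<delta> / c" and "S \<ge> 0"
    using beta_inv_solves[OF cont beta_decr beta_lim level(1)] level(2) S_inv by auto
  then have "S > 0" using level(2) by (metis less_eq_real_def less_irrefl)
  then have correction_neg: "c * S * \<beta>' S < 0"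
    using c_pos beta'_neg by (simp add: mult_pos_neg)
  show B_eq: "B_coef \<delta> \<beta> \<beta>' \<tau> = A_coef \<delta> \<beta> \<tau> + c * S_star \<delta> \<beta> \<tau> * \<beta>' (S_star \<delta> \<beta> \<tau>)"
    using B_coef_identity[of \<delta> \<tau> \<beta> \<beta>'] c_pos S_level by (simp add: c_def S_def)
  then show "B_coef \<delta> \<beta> \<beta>' \<tau> < A_coef \<delta> \<beta> \<tau>"
    using correction_neg by (simp add: S_def)
  have A_eq: "A_coef \<delta> \<beta> \<tau> = \<delta> + \<delta> / c"
    by (simp add: A_coef_def S_level flip: S_def)
  then show "A_coef \<delta> \<beta> \<tau> > 0" using delta_pos level(1) by simp
  have "2 * \<delta> + 2 * (\<delta> / c) = 4 * \<delta> * exp (-\<delta>*\<tau>) / c"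
    using c_pos by (simp add: c_def field_simps)
  then show "A_coef \<delta> \<beta> \<tau> + B_coef \<delta> \<beta> \<beta>' \<tau> =
          4 * \<delta> * exp (-\<delta>*\<tau>) / c + c * chi \<beta>' (beta_inv \<beta> (\<delta> / c))"
    unfolding B_eq A_eq chi_def S_inv by (simp add: algebra_simps flip: S_def)
qed

theorem mainTheorem8:
  fixes \<delta> :: real and \<beta> \<beta>' :: "real \<Rightarrow> real"
  assumes delta_pos: "\<delta> > 0"
    and beta_pos: "\<And>s. s \<ge> 0 \<Longrightarrow> \<beta> s > 0"
    and beta_deriv: "\<And>s. s \<ge> 0 \<Longrightarrow> (\<beta> has_real_derivative \<beta>' s) (at s within {0..})"
    and beta'_cont: "continuous_on {0..} \<beta>'"
    and beta_decr: "\<And>x y. 0 \<le> x \<Longrightarrow> x < y \<Longrightarrow> \<beta> y < \<beta> x"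
    and beta'_neg: "\<And>s. s > 0 \<Longrightarrow> \<beta>' s < 0"
    and beta_lim: "(\<beta> \<longlongrightarrow> 0) at_top"
    and delta_lt: "\<delta> < \<beta> 0"
  shows "\<forall>\<tau>. 0 \<le> \<tau> \<and> \<tau> < tau_bar \<delta> \<beta> \<longrightarrow>
     B_coef \<delta> \<beta> \<beta>' \<tau> = A_coef \<delta> \<beta> \<tau>
        + (2 * exp (-\<delta>*\<tau>) - 1) * S_star \<delta> \<beta> \<tau> * \<beta>' (S_star \<delta> \<beta> \<tau>)
   \<and> B_coef \<delta> \<beta> \<beta>' \<tau> < A_coef \<delta> \<beta> \<tau>
   \<and> (0::complex) + complex_of_real (A_coef \<delta> \<beta> \<tau>)
        - complex_of_real (B_coef \<delta> \<beta> \<beta>' \<tau>) * exp (- 0 * complex_of_real \<tau>) \<noteq> 0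
   \<and> (A_coef \<delta> \<beta> \<tau> < \<bar>B_coef \<delta> \<beta> \<beta>' \<tau>\<bar> \<longleftrightarrow>
        4 * \<delta> * exp (-\<delta>*\<tau>) / (2 * exp (-\<delta>*\<tau>) - 1)
        + (2 * exp (-\<delta>*\<tau>) - 1) * chi \<beta>' (beta_inv \<beta> (\<delta> / (2 * exp (-\<delta>*\<tau>) - 1))) < 0)
   \<and> (\<forall>\<omega>::real. \<i> * complex_of_real \<omega> + complex_of_real (A_coef \<delta> \<beta> \<tau>)
          - complex_of_real (B_coef \<delta> \<beta> \<beta>' \<tau>) * exp (- (\<i> * complex_of_real \<omega>) * complex_of_real \<tau>) = 0
        \<longrightarrow> A_coef \<delta> \<beta> \<tau> < \<bar>B_coef \<delta> \<beta> \<beta>' \<tau>\<bar> \<and> B_coef \<delta> \<beta> \<beta>' \<tau> < 0)"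
proof (intro allI impI)
  fix \<tau> assume \<tau>: "0 \<le> \<tau> \<and> \<tau> < tau_bar \<delta> \<beta>"
  note coef = admissible_delay_coefficients[OF delta_pos beta_pos beta_deriv beta_decr beta'_neg beta_lim \<tau>]
  have B_lt_A: "B_coef \<delta> \<beta> \<beta>' \<tau> < A_coef \<delta> \<beta> \<tau>" by (rule coef(2))
  have A_pos: "A_coef \<delta> \<beta> \<tau> > 0" by (rule coef(3))
  show "B_coef \<delta> \<beta> \<beta>' \<tau> = A_coef \<delta> \<beta> \<tau>
        + (2 * exp (-\<delta>*\<tau>) - 1) * S_star \<delta> \<beta> \<tau> * \<beta>' (S_star \<delta> \<beta> \<tau>)
   \<and> B_coef \<delta> \<beta> \<beta>' \<tau> < A_coef \<delta> \<beta> \<tau>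
   \<and> (0::complex) + complex_of_real (A_coef \<delta> \<beta> \<tau>)
        - complex_of_real (B_coef \<delta> \<beta> \<beta>' \<tau>) * exp (- 0 * complex_of_real \<tau>) \<noteq> 0
   \<and> (A_coef \<delta> \<beta> \<tau> < \<bar>B_coef \<delta> \<beta> \<beta>' \<tau>\<bar> \<longleftrightarrow>
        4 * \<delta> * exp (-\<delta>*\<tau>) / (2 * exp (-\<delta>*\<tau>) - 1)
        + (2 * exp (-\<delta>*\<tau>) - 1) * chi \<beta>' (beta_inv \<beta> (\<delta> / (2 * exp (-\<delta>*\<tau>) - 1))) < 0)
   \<and> (\<forall>\<omega>::real. \<i> * complex_of_real \<omega> + complex_of_real (A_coef \<delta> \<beta> \<tau>)
          - complex_of_real (B_coef \<delta> \<beta> \<beta>' \<tau>) * exp (- (\<i> * complex_of_real \<omega>) * complex_of_real \<tau>) = 0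
        \<longrightarrow> A_coef \<delta> \<beta> \<tau> < \<bar>B_coef \<delta> \<beta> \<beta>' \<tau>\<bar> \<and> B_coef \<delta> \<beta> \<beta>' \<tau> < 0)"
    using coef(1,4) B_lt_A dominance_iff_sum_neg[OF A_pos B_lt_A]
      imaginary_root_dominance[OF B_lt_A]
    by (auto simp flip: of_real_diff)
qed

end
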